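(* Let $d\ge 1$ and let $\mathcal{L}_{\leq d}$ be the set of all lonesum $0$-$1$ matrices (of any size, including the empty $0\times 0$ matrix) with no all-zero row and no all-zero column, in which at most $d$ columns are of the same type and at most $d$ rows are of the same type. For a matrix $M$ let $r(M)$ and $c(M)$ be its numbers of rows and columns, and define the formal power series \[ L_{\leq d}(x,y)=\sum_{M\in\mathcal{L}_{\leq d}}\frac{x^{r(M)}}{r(M)!}\frac{y^{c(M)}}{c(M)!}. \] Then \[ L_{\leq d}(x,y)=\frac{1}{E_d(x)+E_d(y)-E_d(x)E_d(y)},\qquad\text{where } E_d(z)=\sum_{i=0}^{d}\frac{z^i}{i!}. \]
   Context: A $0$-$1$ matrix is lonesum if it is uniquely determined by its row sum vector and column sum vector; equivalently, it contains no $2\times 2$ submatrix equal to $\begin{pmatrix}1&0\\0&1\end{pmatrix}$ or $\begin{pmatrix}0&1\\1&0\end{pmatrix}$. Two rows (resp. columns) are of the same type iff they are identical vectors. *)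

theory Defs
  imports "HOL-Computational_Algebra.Formal_Power_Series"
begin

text \<open>An r x c 0-1 matrix is a function M :: nat => nat => bool that is False
outside the index range {0..<r} x {0..<c}.\<close>
definition mats :: "nat \<Rightarrow> nat \<Rightarrow> (nat \<Rightarrow> nat \<Rightarrow> bool) set" where
  "mats r c = {M. \<forall>i j. M i j \<longrightarrow> i < r \<and> j < c}"

definition row_sum :: "nat \<Rightarrow> (nat \<Rightarrow> nat \<Rightarrow> bool) \<Rightarrow> nat \<Rightarrow> nat" where
  "row_sum c M i = card {j. j < c \<and> M i j}"

definition col_sum :: "nat \<Rightarrow> (nat \<Rightarrow> nat \<Rightarrow> bool) \<Rightarrow> nat \<Rightarrow> nat" where
  "col_sum r M j = card {i. i < r \<and> M i j}"

definition lonesum :: "nat \<Rightarrow> nat \<Rightarrow> (nat \<Rightarrow> nat \<Rightarrow> bool) \<Rightarrow> bool" where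
  "lonesum r c M \<longleftrightarrow> (\<forall>N \<in> mats r c.
      (\<forall>i<r. row_sum c N i = row_sum c M i) \<and> (\<forall>j<c. col_sum r N j = col_sum r M j)
      \<longrightarrow> N = M)"

definition same_row :: "nat \<Rightarrow> (nat \<Rightarrow> nat \<Rightarrow> bool) \<Rightarrow> nat \<Rightarrow> nat \<Rightarrow> bool" where
  "same_row c M i i' \<longleftrightarrow> (\<forall>j<c. M i j = M i' j)"

definition same_col :: "nat \<Rightarrow> (nat \<Rightarrow> nat \<Rightarrow> bool) \<Rightarrow> nat \<Rightarrow> nat \<Rightarrow> bool" where
  "same_col r M j j' \<longleftrightarrow> (\<forall>i<r. M i j = M i j')"

definition in_L :: "nat \<Rightarrow> nat \<Rightarrow> nat \<Rightarrow> (nat \<Rightarrow> nat \<Rightarrow> bool) \<Rightarrow> bool" where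
  "in_L d r c M \<longleftrightarrow> M \<in> mats r c \<and> lonesum r c M
     \<and> (\<forall>i<r. \<exists>j<c. M i j) \<and> (\<forall>j<c. \<exists>i<r. M i j)
     \<and> (\<forall>i<r. card {i'. i' < r \<and> same_row c M i i'} \<le> d)
     \<and> (\<forall>j<c. card {j'. j' < c \<and> same_col r M j j'} \<le> d)"

text \<open>Bivariate exponential generating function as a power series in x
whose coefficients are power series in y.\<close>
definition L_series :: "nat \<Rightarrow> rat fps fps" where
  "L_series d = Abs_fps (\<lambda>r. Abs_fps (\<lambda>c.
      of_nat (card {M. in_L d r c M}) / (fact r * fact c)))"

definition E_trunc :: "nat \<Rightarrow> rat fps" where
  "E_trunc d = Abs_fps (\<lambda>i. if i \<le> d then 1 / fact i else 0)"

definition E_x :: "nat \<Rightarrow> rat fps fps" where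
  "E_x d = Abs_fps (\<lambda>i. fps_const (fps_nth (E_trunc d) i))"

definition E_y :: "nat \<Rightarrow> rat fps fps" where
  "E_y d = fps_const (E_trunc d)"

end

(*
  A lonesum matrix has no 2x2 switch, since flipping one would preserve all line sums; hence
  its row supports form a chain under inclusion. With k distinct rows, let f rank each row in
  this chain and let g count, for each column, the distinct rows containing it: then the entry
  (i, j) is 1 exactly when f i + g j > k. When there are no zero lines, f and g are ordered
  partitions of the rows and of the columns into k blocks, two rows (columns) have the same type
  iff they lie in the same block, and conversely every such pair determines a lonesum staircase
  matrix. Ordered partitions of an n-set into k blocks of size at most d are counted by
  n! [z^n] (E_d(z) - 1)^k, so the generating function is the geometric series
  sum_k ((E_d(x) - 1) (E_d(y) - 1))^k = 1 / (E_d(x) + E_d(y) - E_d(x) E_d(y)).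
*)

theory Submission
  imports Defs
begin

unbundle fps_syntax

section \<open>Ordered partitions with bounded blocks\<close>

text \<open>f x is the number of the block containing x, and f vanishes outside A.\<close>
definition ordered_partition :: "nat \<Rightarrow> 'a set \<Rightarrow> nat \<Rightarrow> ('a \<Rightarrow> nat) \<Rightarrow> bool" where
  "ordered_partition d A k f \<longleftrightarrow>
     f ` A = {1..k} \<and> (\<forall>x. x \<notin> A \<longrightarrow> f x = 0) \<and> (\<forall>b. card {x\<in>A. f x = b} \<le> d)"

lemma ordered_partitionD:
  assumes "ordered_partition d A k f"
  shows "x \<in> A \<Longrightarrow> 1 \<le> f x \<and> f x \<le> k" and "b \<in> {1..k} \<Longrightarrow> \<exists>x\<in>A. f x = b"
    and "x \<notin> A \<Longrightarrow> f x = 0" and "card {x\<in>A. f x = b} \<le> d"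
proof -
  have img: "f ` A = {1..k}"
    using assms by (simp add: ordered_partition_def)
  show "x \<in> A \<Longrightarrow> 1 \<le> f x \<and> f x \<le> k"
    using imageI[of x A f] img by simp
  show "b \<in> {1..k} \<Longrightarrow> \<exists>x\<in>A. f x = b"
    using img by (metis imageE)
  show "x \<notin> A \<Longrightarrow> f x = 0" and "card {x\<in>A. f x = b} \<le> d"
    using assms by (simp_all add: ordered_partition_def)
qed

lemma finite_ordered_partitions:
  assumes "finite A"
  shows "finite {f. ordered_partition d A k f}"
proof (rule finite_subset)
  show "{f. ordered_partition d A k f} \<subseteq> {f. \<forall>x. (x \<in> A \<longrightarrow> f x \<in> {0..k}) \<and> (x \<notin> A \<longrightarrow> f x = 0)}"
    by (auto dest: ordered_partitionD)
  show "finite \<dots>"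
    using finite_set_of_finite_funs[OF assms finite_atLeastAtMost] .
qed

lemma ordered_partitions_0:
  "{f. ordered_partition d A 0 f} = (if A = {} then {\<lambda>_. 0} else {})"
  by (auto simp: ordered_partition_def)

lemma ordered_partition_remove_last_block:
  assumes "finite A" and f: "ordered_partition d A (Suc k) f"
  defines "S \<equiv> {x\<in>A. f x = Suc k}"
  shows "S \<subseteq> A \<and> 1 \<le> card S \<and> card S \<le> d"
    and "ordered_partition d (A - S) k (\<lambda>x. if f x = Suc k then 0 else f x)"
proof -
  note f_range = ordered_partitionD(1)[OF f] and f_onto = ordered_partitionD(2)[OF f]
  have "S \<noteq> {}"
    using f_onto[of "Suc k"] by (auto simp: S_def)
  then show "S \<subseteq> A \<and> 1 \<le> card S \<and> card S \<le> d"
    using \<open>finite A\<close> ordered_partitionD(4)[OF f, of "Suc k"]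
    by (auto simp: S_def Suc_le_eq card_gt_0_iff)
  have "card {x \<in> A - S. (if f x = Suc k then 0 else f x) = b} \<le> card {x\<in>A. f x = b}" for b
    by (rule card_mono) (use \<open>finite A\<close> in \<open>auto simp: S_def\<close>)
  then have "card {x \<in> A - S. (if f x = Suc k then 0 else f x) = b} \<le> d" for b
    using ordered_partitionD(4)[OF f, of b] le_trans by blast
  moreover have "(\<lambda>x. if f x = Suc k then 0 else f x) ` (A - S) = {1..k}"
  proof (intro equalityI subsetI)
    fix b assume "b \<in> (\<lambda>x. if f x = Suc k then 0 else f x) ` (A - S)"
    then show "b \<in> {1..k}"
      using f_range by (auto simp: S_def le_Suc_eq)
  next
    fix b assume "b \<in> {1..k}"
    then obtain x where "x \<in> A" "f x = b"
      using f_onto[of b] by auto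
    then show "b \<in> (\<lambda>x. if f x = Suc k then 0 else f x) ` (A - S)"
      using \<open>b \<in> {1..k}\<close> by (auto simp: S_def image_iff)
  qed
  ultimately show "ordered_partition d (A - S) k (\<lambda>x. if f x = Suc k then 0 else f x)"
    using ordered_partitionD(3)[OF f] by (auto simp: ordered_partition_def S_def)
qed

lemma ordered_partition_add_last_block:
  assumes S: "S \<subseteq> A" "S \<noteq> {}" "card S \<le> d" and g: "ordered_partition d (A - S) k g"
  shows "ordered_partition d A (Suc k) (\<lambda>x. if x \<in> S then Suc k else g x)"
proof -
  note g_range = ordered_partitionD(1)[OF g] and g_onto = ordered_partitionD(2)[OF g]
  have "{x\<in>A. (if x \<in> S then Suc k else g x) = b} = (if b = Suc k then S else {x \<in> A - S. g x = b})" for b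
    using S(1) g_range by force
  moreover have "(\<lambda>x. if x \<in> S then Suc k else g x) ` A = {1..Suc k}"
  proof (intro equalityI subsetI)
    fix b assume "b \<in> (\<lambda>x. if x \<in> S then Suc k else g x) ` A"
    then show "b \<in> {1..Suc k}"
      using g_range by force
  next
    fix b assume b: "b \<in> {1..Suc k}"
    show "b \<in> (\<lambda>x. if x \<in> S then Suc k else g x) ` A"
    proof (cases "b = Suc k")
      case True
      then show ?thesis
        using S(1,2) by auto
    next
      case False
      then obtain x where "x \<in> A - S" "g x = b"
        using g_onto[of b] b by auto
      then show ?thesis
        by (auto simp: image_iff)
    qed
  qed
  ultimately show ?thesis
    using S ordered_partitionD(3,4)[OF g] by (auto simp: ordered_partition_def)
qed

lemma card_ordered_partitions_Suc:
  assumes "finite A"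
  shows "card {f. ordered_partition d A (Suc k) f} =
    (\<Sum>S | S \<subseteq> A \<and> 1 \<le> card S \<and> card S \<le> d. card {g. ordered_partition d (A - S) k g})"
proof -
  let ?blocks = "{S. S \<subseteq> A \<and> 1 \<le> card S \<and> card S \<le> d}"
  define cut where "cut f = ({x\<in>A. f x = Suc k}, \<lambda>x. if f x = Suc k then 0 else f x)"
    for f :: "'a \<Rightarrow> nat"
  define join :: "'a set \<times> ('a \<Rightarrow> nat) \<Rightarrow> 'a \<Rightarrow> nat"
    where "join = (\<lambda>(S, g) x. if x \<in> S then Suc k else g x)"
  have "bij_betw cut {f. ordered_partition d A (Suc k) f}
      (SIGMA S:?blocks. {g. ordered_partition d (A - S) k g})"
  proof (rule bij_betw_byWitness[where f' = join])
    show "\<forall>f\<in>{f. ordered_partition d A (Suc k) f}. join (cut f) = f"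
      by (auto simp: cut_def join_def fun_eq_iff dest: ordered_partitionD(3))
    show "\<forall>Sg\<in>(SIGMA S:?blocks. {g. ordered_partition d (A - S) k g}). cut (join Sg) = Sg"
    proof (clarsimp)
      fix S g assume S: "S \<subseteq> A" and g: "ordered_partition d (A - S) k g"
      have "g x \<noteq> Suc k" for x
        using ordered_partitionD(1,3)[OF g, of x] by (cases "x \<in> A - S") auto
      moreover have "x \<in> S \<Longrightarrow> g x = 0" for x
        using ordered_partitionD(3)[OF g, of x] by simp
      ultimately show "cut (join (S, g)) = (S, g)"
        using S by (auto simp: cut_def join_def)
    qed
    show "cut ` {f. ordered_partition d A (Suc k) f}
        \<subseteq> (SIGMA S:?blocks. {g. ordered_partition d (A - S) k g})"
      using ordered_partition_remove_last_block[OF assms] by (auto simp: cut_def)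
    show "join ` (SIGMA S:?blocks. {g. ordered_partition d (A - S) k g})
        \<subseteq> {f. ordered_partition d A (Suc k) f}"
      by (auto simp: join_def intro!: ordered_partition_add_last_block)
  qed
  then have "card {f. ordered_partition d A (Suc k) f}
      = card (SIGMA S:?blocks. {g. ordered_partition d (A - S) k g})"
    by (rule bij_betw_same_card)
  also have "\<dots> = (\<Sum>S\<in>?blocks. card {g. ordered_partition d (A - S) k g})"
    using assms by (intro card_SigmaI) (auto intro: finite_ordered_partitions)
  finally show ?thesis .
qed

lemma sum_subsets_by_card:
  fixes h :: "nat \<Rightarrow> 'b::comm_semiring_1"
  assumes "finite A"
  shows "(\<Sum>S | S \<subseteq> A \<and> P (card S). h (card S))
    = (\<Sum>s | s \<le> card A \<and> P s. of_nat (card A choose s) * h s)"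
proof -
  let ?subsets = "{S. S \<subseteq> A \<and> P (card S)}"
  have "finite ?subsets"
    using assms by (auto intro: finite_subset[of _ "Pow A"])
  then have "(\<Sum>S\<in>?subsets. h (card S))
      = (\<Sum>s | s \<le> card A \<and> P s. \<Sum>S | S \<in> ?subsets \<and> card S = s. h (card S))"
    by (rule sum.group[symmetric]) (use assms card_mono in auto)
  also have "\<dots> = (\<Sum>s | s \<le> card A \<and> P s. of_nat (card A choose s) * h s)"
  proof (rule sum.cong[OF refl])
    fix s assume "s \<in> {s. s \<le> card A \<and> P s}"
    then have "{S. S \<in> ?subsets \<and> card S = s} = {S. S \<subseteq> A \<and> card S = s}"
      by auto
    then show "(\<Sum>S | S \<in> ?subsets \<and> card S = s. h (card S)) = of_nat (card A choose s) * h s"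
      using n_subsets[OF assms, of s] by simp
  qed
  finally show ?thesis .
qed

definition block_egf :: "nat \<Rightarrow> rat fps" where
  "block_egf d = E_trunc d - 1"

lemma block_egf_nth: "block_egf d $ s = (if 1 \<le> s \<and> s \<le> d then 1 / fact s else 0)"
  by (auto simp: block_egf_def E_trunc_def)

lemma card_ordered_partitions:
  assumes "finite A"
  shows "of_nat (card {f. ordered_partition d A k f}) = fact (card A) * (block_egf d ^ k) $ card A"
  using assms
proof (induction k arbitrary: A)
  case 0
  then show ?case
    by (simp add: ordered_partitions_0)
next
  case (Suc k)
  define n where "n = card A"
  let ?a = "\<lambda>m. (block_egf d ^ k) $ m"
  have "of_nat (card {f. ordered_partition d A (Suc k) f})
      = (\<Sum>S | S \<subseteq> A \<and> 1 \<le> card S \<and> card S \<le> d. fact (n - card S) * ?a (n - card S) :: rat)"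
  proof -
    have "card (A - S) = n - card S" if "S \<subseteq> A" for S
      using that Suc.prems by (simp add: n_def card_Diff_subset finite_subset)
    then show ?thesis
      using Suc.prems by (simp add: card_ordered_partitions_Suc Suc.IH finite_subset)
  qed
  also have "\<dots> = (\<Sum>s | s \<le> n \<and> 1 \<le> s \<and> s \<le> d. of_nat (n choose s) * (fact (n - s) * ?a (n - s)))"
    unfolding n_def by (rule sum_subsets_by_card[OF Suc.prems])
  also have "\<dots> = (\<Sum>s | s \<le> n \<and> 1 \<le> s \<and> s \<le> d. fact n * (block_egf d $ s * ?a (n - s)))"
    by (intro sum.cong refl) (simp add: binomial_fact block_egf_nth field_simps)
  also have "\<dots> = (\<Sum>s\<le>n. fact n * (block_egf d $ s * ?a (n - s)))"
    by (intro sum.mono_neutral_left) (auto simp: block_egf_nth)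
  also have "\<dots> = fact n * (block_egf d ^ Suc k) $ n"
    by (simp add: fps_mult_nth atLeast0AtMost sum_distrib_left)
  finally show ?case
    by (simp add: n_def)
qed

section \<open>Finite chains of sets\<close>

definition members_below :: "'a set set \<Rightarrow> 'a set \<Rightarrow> nat" where
  "members_below \<C> X = card {Y\<in>\<C>. Y \<subseteq> X}"

definition members_containing :: "'a set set \<Rightarrow> 'a \<Rightarrow> nat" where
  "members_containing \<C> x = card {Y\<in>\<C>. x \<in> Y}"

context
  fixes \<C> :: "'a set set"
  assumes finite: "finite \<C>" and chain: "chain\<^sub>\<subseteq> \<C>"
begin

lemma members_below_le_iff:
  assumes "X \<in> \<C>" "Y \<in> \<C>"
  shows "members_below \<C> X \<le> members_below \<C> Y \<longleftrightarrow> X \<subseteq> Y"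
proof
  assume le: "members_below \<C> X \<le> members_below \<C> Y"
  show "X \<subseteq> Y"
  proof (rule ccontr)
    assume "\<not> X \<subseteq> Y"
    then have "Y \<subset> X"
      using chain assms by (auto simp: chain_subset_def)
    then have "{Z\<in>\<C>. Z \<subseteq> Y} \<subset> {Z\<in>\<C>. Z \<subseteq> X}"
      using assms by auto
    then have "members_below \<C> Y < members_below \<C> X"
      unfolding members_below_def by (rule psubset_card_mono[rotated]) (use finite in auto)
    then show False
      using le by simp
  qed
next
  assume "X \<subseteq> Y"
  then show "members_below \<C> X \<le> members_below \<C> Y"
    unfolding members_below_def by (intro card_mono) (use finite in auto)
qed

lemma inj_on_members_below: "inj_on (members_below \<C>) \<C>"
  by (intro inj_onI) (metis members_below_le_iff order_refl subset_antisym)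

lemma members_below_image: "members_below \<C> ` \<C> = {1..card \<C>}"
proof (rule card_subset_eq)
  have "1 \<le> members_below \<C> X \<and> members_below \<C> X \<le> card \<C>" if "X \<in> \<C>" for X
  proof -
    have "{Y\<in>\<C>. Y \<subseteq> X} \<noteq> {}"
      using that by auto
    then show ?thesis
      unfolding members_below_def using finite
      by (auto simp: Suc_le_eq card_gt_0_iff intro: card_mono)
  qed
  then show "members_below \<C> ` \<C> \<subseteq> {1..card \<C>}"
    by auto
  show "card (members_below \<C> ` \<C>) = card {1..card \<C>}"
    by (simp add: card_image inj_on_members_below)
qed simp

text \<open>The members below X and the members containing x exhaust the chain, and they overlap
  iff x \<in> X.\<close>
lemma mem_iff_card_less_members:
  assumes "X \<in> \<C>"
  shows "x \<in> X \<longleftrightarrow> card \<C> < members_below \<C> X + members_containing \<C> x"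
proof -
  let ?below = "{Y\<in>\<C>. Y \<subseteq> X}" and ?containing = "{Y\<in>\<C>. x \<in> Y}"
  have sum: "members_below \<C> X + members_containing \<C> x
      = card (?below \<union> ?containing) + card (?below \<inter> ?containing)"
    unfolding members_below_def members_containing_def by (rule card_Un_Int) (use finite in auto)
  show ?thesis
  proof
    assume "x \<in> X"
    then have "?below \<union> ?containing = \<C>"
      using chain assms by (auto simp: chain_subset_def)
    moreover have "?below \<inter> ?containing \<noteq> {}"
      using assms \<open>x \<in> X\<close> by auto
    ultimately show "card \<C> < members_below \<C> X + members_containing \<C> x"
      unfolding sum using finite by (simp add: card_gt_0_iff)
  next
    assume less: "card \<C> < members_below \<C> X + members_containing \<C> x"
    show "x \<in> X"
    proof (rule ccontr)
      assume "x \<notin> X"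
      then have "?below \<inter> ?containing = {}"
        by auto
      moreover have "card (?below \<union> ?containing) \<le> card \<C>"
        by (rule card_mono) (use finite in auto)
      ultimately show False
        using less unfolding sum by simp
    qed
  qed
qed

lemma members_containing_image:
  assumes "{} \<notin> \<C>"
  shows "members_containing \<C> ` \<Union>\<C> = {1..card \<C>}"
proof (intro equalityI subsetI)
  fix b assume "b \<in> members_containing \<C> ` \<Union>\<C>"
  then obtain x X where b: "b = members_containing \<C> x" and "x \<in> X" "X \<in> \<C>"
    by auto
  then have "{Y\<in>\<C>. x \<in> Y} \<noteq> {}" and "{Y\<in>\<C>. x \<in> Y} \<subseteq> \<C>"
    by auto
  then show "b \<in> {1..card \<C>}"
    unfolding b members_containing_def using finite
    by (auto simp: Suc_le_eq card_gt_0_iff intro: card_mono)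
next
  fix b assume b: "b \<in> {1..card \<C>}"
  define a where "a = card \<C> + 1 - b"
  have "1 \<le> a"
    using b by (auto simp: a_def)
  have "a \<in> members_below \<C> ` \<C>"
    using b by (auto simp: members_below_image a_def)
  then obtain X where X: "X \<in> \<C>" "members_below \<C> X = a"
    by auto
  have containing_le: "members_containing \<C> y \<le> card \<C>" for y
    unfolding members_containing_def by (rule card_mono) (use finite in auto)
  obtain x where "x \<in> X" "\<not> card \<C> < a - 1 + members_containing \<C> x"
  proof (cases "a = 1")
    case True
    obtain x where "x \<in> X"
      using assms X(1) by (metis all_not_in_conv)
    then show ?thesis
      using that True containing_le[of x] by simp
  next
    case False
    then have "a - 1 \<in> members_below \<C> ` \<C>"
      using b by (auto simp: members_below_image a_def)
    then obtain Y where Y: "Y \<in> \<C>" "members_below \<C> Y = a - 1"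
      by auto
    then have "\<not> X \<subseteq> Y"
      using members_below_le_iff[OF X(1) Y(1)] X(2) Y(2) \<open>1 \<le> a\<close> by auto
    then obtain x where "x \<in> X" "x \<notin> Y"
      by auto
    then show ?thesis
      using that mem_iff_card_less_members[OF Y(1), of x] Y by simp
  qed
  moreover have "card \<C> < a + members_containing \<C> x"
    using mem_iff_card_less_members[OF X(1)] X \<open>x \<in> X\<close> by simp
  ultimately have "members_containing \<C> x = b"
    using b by (auto simp: a_def)
  then show "b \<in> members_containing \<C> ` \<Union>\<C>"
    using \<open>x \<in> X\<close> X by auto
qed

end

section \<open>Lonesum matrices as staircases\<close>

definition row_support :: "nat \<Rightarrow> (nat \<Rightarrow> nat \<Rightarrow> bool) \<Rightarrow> nat \<Rightarrow> nat set" where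
  "row_support c M i = {j. j < c \<and> M i j}"

lemma same_row_iff_row_support: "same_row c M i i' \<longleftrightarrow> row_support c M i = row_support c M i'"
  by (auto simp: same_row_def row_support_def)

lemma row_sum_eq_sum: "int (row_sum c M i) = (\<Sum>j<c. of_bool (M i j))"
proof -
  have "{..<c} \<inter> {j. M i j} = {j. j < c \<and> M i j}"
    by auto
  then show ?thesis
    by (simp add: sum_of_bool_eq row_sum_def)
qed

lemma col_sum_eq_sum: "int (col_sum r M j) = (\<Sum>i<r. of_bool (M i j))"
proof -
  have "{..<r} \<inter> {i. M i j} = {i. i < r \<and> M i j}"
    by auto
  then show ?thesis
    by (simp add: sum_of_bool_eq col_sum_def)
qed

text \<open>If the ones of M are cut out by a strict linear threshold u i + v j > 0, then any N with
  the same line sums satisfies \<open>\<Sum>(M i j - N i j)(u i + v j) = 0\<close>, a sum of nonnegative terms.\<close>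
lemma lonesum_threshold:
  fixes u v :: "nat \<Rightarrow> int"
  assumes M: "M \<in> mats r c"
    and threshold: "\<And>i j. i < r \<Longrightarrow> j < c \<Longrightarrow> M i j \<longleftrightarrow> 0 < u i + v j"
    and nonzero: "\<And>i j. i < r \<Longrightarrow> j < c \<Longrightarrow> u i + v j \<noteq> 0"
  shows "lonesum r c M"
  unfolding lonesum_def
proof (intro ballI impI)
  fix N assume N: "N \<in> mats r c"
    and sums: "(\<forall>i<r. row_sum c N i = row_sum c M i) \<and> (\<forall>j<c. col_sum r N j = col_sum r M j)"
  define X where "X i j = (of_bool (M i j) - of_bool (N i j) :: int)" for i j
  have "(\<Sum>j<c. X i j) = 0" if "i < r" for i
    using sums that by (simp add: X_def sum_subtractf flip: row_sum_eq_sum)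
  moreover have "(\<Sum>i<r. X i j) = 0" if "j < c" for j
    using sums that by (simp add: X_def sum_subtractf flip: col_sum_eq_sum)
  ultimately have "(\<Sum>i<r. \<Sum>j<c. X i j * (u i + v j)) = 0"
    by (simp add: distrib_left sum.distrib sum_distrib_left sum_distrib_right sum.swap[of _ "{..<c}"]
        mult.commute[of "X _ _"] flip: sum_distrib_left)
  then have total: "(\<Sum>(i, j)\<in>{..<r} \<times> {..<c}. X i j * (u i + v j)) = 0"
    by (simp add: sum.cartesian_product)
  have nonneg: "0 \<le> X i j * (u i + v j)" if "i < r" "j < c" for i j
    using threshold[OF that] by (cases "N i j") (auto simp: X_def)
  show "N = M"
  proof (intro ext)
    fix i j
    show "N i j = M i j"
    proof (cases "i < r \<and> j < c")
      case True
      then have "X i j * (u i + v j) = 0"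
        using total nonneg by (subst (asm) sum_nonneg_eq_0_iff) auto
      then show ?thesis
        using nonzero True by (auto simp: X_def split: if_splits)
    next
      case False
      then show ?thesis
        using M N by (auto simp: mats_def)
    qed
  qed
qed

lemma lonesum_no_switch:
  assumes lonesum: "lonesum r c M" and M: "M \<in> mats r c"
    and "i < r" "i' < r" "j < c" "j' < c"
    and ones: "M i j" "M i' j'" and zeros: "\<not> M i j'" "\<not> M i' j"
  shows False
proof -
  have "i \<noteq> i'" "j \<noteq> j'"
    using ones zeros by auto
  define N where "N x y = (if x \<in> {i, i'} \<and> y \<in> {j, j'} then \<not> M x y else M x y)" for x y
  have "N \<in> mats r c"
    using M assms(3-6) by (auto simp: mats_def N_def)
  moreover have "row_sum c N x = row_sum c M x" for x
  proof -
    have "{y. y < c \<and> N x y} =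
        (if x = i then insert j' ({y. y < c \<and> M x y} - {j})
         else if x = i' then insert j ({y. y < c \<and> M x y} - {j'})
         else {y. y < c \<and> M x y})"
      using \<open>i \<noteq> i'\<close> \<open>j \<noteq> j'\<close> assms(5,6) ones zeros by (auto simp: N_def)
    moreover have "0 < card {y. y < c \<and> M i y}" "0 < card {y. y < c \<and> M i' y}"
      using assms(5,6) ones by (auto simp: card_gt_0_iff)
    ultimately show ?thesis
      unfolding row_sum_def using assms(5,6) ones zeros by simp
  qed
  moreover have "col_sum r N y = col_sum r M y" for y
  proof -
    have "{x. x < r \<and> N x y} =
        (if y = j then insert i' ({x. x < r \<and> M x y} - {i})
         else if y = j' then insert i ({x. x < r \<and> M x y} - {i'})
         else {x. x < r \<and> M x y})"
      using \<open>i \<noteq> i'\<close> \<open>j \<noteq> j'\<close> assms(3,4) ones zeros by (auto simp: N_def)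
    moreover have "0 < card {x. x < r \<and> M x j}" "0 < card {x. x < r \<and> M x j'}"
      using assms(3,4) ones by (auto simp: card_gt_0_iff)
    ultimately show ?thesis
      unfolding col_sum_def using assms(3,4) ones zeros by simp
  qed
  ultimately have "N = M"
    using lonesum by (simp add: lonesum_def)
  then show False
    using ones by (metis N_def insertI1)
qed

lemma lonesum_row_supports_chain:
  assumes "lonesum r c M" "M \<in> mats r c"
  shows "chain\<^sub>\<subseteq> (row_support c M ` {..<r})"
  unfolding chain_subset_def
proof (intro ballI)
  fix X Y assume "X \<in> row_support c M ` {..<r}" "Y \<in> row_support c M ` {..<r}"
  then obtain i i' where i: "i < r" "X = row_support c M i" and i': "i' < r" "Y = row_support c M i'"
    by auto
  show "X \<subseteq> Y \<or> Y \<subseteq> X"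
  proof (rule ccontr)
    assume "\<not> (X \<subseteq> Y \<or> Y \<subseteq> X)"
    then obtain j j' where "j \<in> X" "j \<notin> Y" "j' \<in> Y" "j' \<notin> X"
      by auto
    then show False
      using lonesum_no_switch[OF assms i(1) i'(1), of j j'] i i' by (auto simp: row_support_def)
  qed
qed

definition staircase :: "nat \<Rightarrow> nat \<Rightarrow> nat \<Rightarrow> (nat \<Rightarrow> nat) \<Rightarrow> (nat \<Rightarrow> nat) \<Rightarrow> nat \<Rightarrow> nat \<Rightarrow> bool" where
  "staircase r c k f g i j \<longleftrightarrow> i < r \<and> j < c \<and> k < f i + g j"

lemma staircase_in_mats: "staircase r c k f g \<in> mats r c"
  by (simp add: mats_def staircase_def)

lemma staircase_transpose: "staircase c r k g f j i = staircase r c k f g i j"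
  by (auto simp: staircase_def)

lemma lonesum_staircase: "lonesum r c (staircase r c k f g)"
  by (rule lonesum_threshold[where u = "\<lambda>i. 2 * (int (f i) - int k) - 1" and v = "\<lambda>j. 2 * int (g j)"])
    (auto simp: staircase_in_mats staircase_def, presburger)

lemma row_support_staircase:
  "i < r \<Longrightarrow> row_support c (staircase r c k f g) i = {j. j < c \<and> k < f i + g j}"
  by (auto simp: row_support_def staircase_def)

lemma staircase_levels_subset_iff:
  assumes g: "ordered_partition d {..<c} k g" and "a \<in> {1..k}" "b \<in> {1..k}"
  shows "{j. j < c \<and> k < a + g j} \<subseteq> {j. j < c \<and> k < b + g j} \<longleftrightarrow> a \<le> b"
proof
  assume sub: "{j. j < c \<and> k < a + g j} \<subseteq> {j. j < c \<and> k < b + g j}"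
  have "k + 1 - a \<in> {1..k}"
    using assms(2) by auto
  then obtain j where "j < c" "g j = k + 1 - a"
    using ordered_partitionD(2)[OF g] by auto
  then show "a \<le> b"
    using sub assms(2) by auto
qed auto

text \<open>The inverse of the staircase encoding: k is the number of distinct rows, f ranks each row in
  the chain of row supports, and g counts the row supports containing a column.\<close>
definition staircase_code :: "nat \<Rightarrow> nat \<Rightarrow> (nat \<Rightarrow> nat \<Rightarrow> bool) \<Rightarrow> nat \<times> (nat \<Rightarrow> nat) \<times> (nat \<Rightarrow> nat)" where
  "staircase_code r c M =
    (let \<C> = row_support c M ` {..<r}
     in (card \<C>, \<lambda>i. if i < r then members_below \<C> (row_support c M i) else 0,
         \<lambda>j. if j < c then members_containing \<C> j else 0))"

lemma staircase_code_staircase: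
  assumes f: "ordered_partition d {..<r} k f" and g: "ordered_partition d {..<c} k g"
  shows "staircase_code r c (staircase r c k f g) = (k, f, g)"
proof -
  define level where "level a = {j. j < c \<and> k < a + g j}" for a
  have level_subset_iff: "level a \<subseteq> level b \<longleftrightarrow> a \<le> b" if "a \<in> {1..k}" "b \<in> {1..k}" for a b
    using staircase_levels_subset_iff[OF g that] by (simp add: level_def)
  have inj: "inj_on level {1..k}"
    by (intro inj_onI) (metis level_subset_iff order_refl le_antisym)
  have f_range: "f i \<in> {1..k}" if "i < r" for i
    using ordered_partitionD(1)[OF f] that by auto
  have supports: "row_support c (staircase r c k f g) ` {..<r} = level ` {1..k}"
  proof -
    have "row_support c (staircase r c k f g) ` {..<r} = level ` f ` {..<r}"
      by (auto simp: row_support_staircase level_def image_image)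
    then show ?thesis
      using f by (simp add: ordered_partition_def)
  qed
  have below: "members_below (level ` {1..k}) (level (f i)) = f i" if "i < r" for i
  proof -
    have "{Y \<in> level ` {1..k}. Y \<subseteq> level (f i)} = level ` {1..f i}"
      using f_range[OF that] by (auto simp: level_subset_iff image_iff) (auto simp: level_def)
    moreover have "inj_on level {1..f i}"
      by (rule inj_on_subset[OF inj]) (use f_range[OF that] in auto)
    ultimately show ?thesis
      unfolding members_below_def by (simp add: card_image)
  qed
  have containing: "members_containing (level ` {1..k}) j = g j" if "j < c" for j
  proof -
    have g_range: "g j \<in> {1..k}"
      using ordered_partitionD(1)[OF g] that by auto
    have "{a \<in> {1..k}. j \<in> level a} = {k + 1 - g j..k}"
      using that g_range by (auto simp: level_def)
    then have "{Y \<in> level ` {1..k}. j \<in> Y} = level ` {k + 1 - g j..k}"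
      by blast
    moreover have "inj_on level {k + 1 - g j..k}"
      by (rule inj_on_subset[OF inj]) (use g_range in auto)
    ultimately show ?thesis
      using g_range unfolding members_containing_def by (simp add: card_image)
  qed
  have "card (level ` {1..k}) = k"
    using card_image[OF inj] by simp
  then show ?thesis
    using supports below containing ordered_partitionD(3)[OF f] ordered_partitionD(3)[OF g]
    by (auto simp: staircase_code_def Let_def row_support_staircase level_def[symmetric])
qed

lemma same_row_staircase_iff:
  assumes f: "ordered_partition d {..<r} k f" and g: "ordered_partition d {..<c} k g"
    and "i < r" "i' < r"
  shows "same_row c (staircase r c k f g) i i' \<longleftrightarrow> f i = f i'"
proof -
  have "f i \<in> {1..k}" "f i' \<in> {1..k}"
    using ordered_partitionD(1)[OF f] assms(3,4) by auto
  then show ?thesis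
    using staircase_levels_subset_iff[OF g] assms(3,4)
    by (auto simp: same_row_iff_row_support row_support_staircase intro: le_antisym)
qed

lemma staircase_rows:
  assumes f: "ordered_partition d {..<r} k f" and g: "ordered_partition d {..<c} k g"
    and "i < r"
  shows "\<exists>j<c. staircase r c k f g i j"
    and "card {i'. i' < r \<and> same_row c (staircase r c k f g) i i'} \<le> d"
proof -
  have "f i \<in> {1..k}"
    using ordered_partitionD(1)[OF f] assms(3) by auto
  then obtain j where "j < c" "g j = k"
    using ordered_partitionD(2)[OF g, of k] by auto
  then show "\<exists>j<c. staircase r c k f g i j"
    using \<open>f i \<in> {1..k}\<close> assms(3) by (auto simp: staircase_def)
  have "{i'. i' < r \<and> same_row c (staircase r c k f g) i i'} = {i' \<in> {..<r}. f i' = f i}"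
    using same_row_staircase_iff[OF f g assms(3)] by auto
  then show "card {i'. i' < r \<and> same_row c (staircase r c k f g) i i'} \<le> d"
    using ordered_partitionD(4)[OF f] by simp
qed

lemma in_L_staircase:
  assumes f: "ordered_partition d {..<r} k f" and g: "ordered_partition d {..<c} k g"
  shows "in_L d r c (staircase r c k f g)"
proof -
  have "same_col r (staircase r c k f g) j j' = same_row r (staircase c r k g f) j j'" for j j'
    by (simp add: same_col_def same_row_def staircase_transpose)
  then show ?thesis
    using staircase_rows[OF f g] staircase_rows[OF g f]
    by (simp add: in_L_def staircase_in_mats lonesum_staircase staircase_transpose)
qed

lemma card_fibre_le:
  assumes "finite A" and classes: "\<And>x. x \<in> A \<Longrightarrow> card {y \<in> A. R x y} \<le> d"
    and refines: "\<And>x y. x \<in> A \<Longrightarrow> y \<in> A \<Longrightarrow> f x = f y \<Longrightarrow> R x y"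
  shows "card {x \<in> A. f x = b} \<le> d"
proof (cases "\<exists>x\<in>A. f x = b")
  case True
  then obtain x where "x \<in> A" "f x = b"
    by blast
  then have "card {y \<in> A. f y = b} \<le> card {y \<in> A. R x y}"
    using refines by (intro card_mono) (use \<open>finite A\<close> in auto)
  then show ?thesis
    using classes[OF \<open>x \<in> A\<close>] by simp
next
  case False
  then have "{x \<in> A. f x = b} = {}"
    by auto
  then show ?thesis
    by (simp only: card.empty le0)
qed

lemma in_L_row_supports:
  assumes "in_L d r c M"
  shows "chain\<^sub>\<subseteq> (row_support c M ` {..<r})"
    and "\<Union>(row_support c M ` {..<r}) = {..<c}" and "{} \<notin> row_support c M ` {..<r}"
  using assms lonesum_row_supports_chain by (auto simp: in_L_def row_support_def)

lemma in_L_staircase_code: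
  assumes L: "in_L d r c M" and code: "staircase_code r c M = (k, f, g)"
  shows "ordered_partition d {..<r} k f \<and> ordered_partition d {..<c} k g \<and> staircase r c k f g = M"
proof -
  have M: "M \<in> mats r c"
    and row_classes: "\<forall>i<r. card {i'. i' < r \<and> same_row c M i i'} \<le> d"
    and col_classes: "\<forall>j<c. card {j'. j' < c \<and> same_col r M j j'} \<le> d"
    using L by (auto simp: in_L_def)
  define \<C> where "\<C> = row_support c M ` {..<r}"
  have finite: "finite \<C>" and chain: "chain\<^sub>\<subseteq> \<C>"
    and "\<Union>\<C> = {..<c}" and "{} \<notin> \<C>"
    using in_L_row_supports[OF L] by (simp_all add: \<C>_def)
  have k: "k = card \<C>"
    and f: "f = (\<lambda>i. if i < r then members_below \<C> (row_support c M i) else 0)"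
    and g: "g = (\<lambda>j. if j < c then members_containing \<C> j else 0)"
    using code by (auto simp: staircase_code_def Let_def \<C>_def)
  have entries: "M i j \<longleftrightarrow> k < f i + g j" if "i < r" "j < c" for i j
    using mem_iff_card_less_members[OF finite chain, of "row_support c M i" j] that
    by (simp add: \<C>_def k f g row_support_def)
  have staircase: "staircase r c k f g = M"
    using entries M by (auto simp: fun_eq_iff staircase_def mats_def)
  have "f ` {..<r} = members_below \<C> ` \<C>"
    by (auto simp: f \<C>_def image_image)
  moreover have "card {i \<in> {..<r}. f i = b} \<le> d" for b
  proof (rule card_fibre_le[where R = "same_row c M"])
    show "f i = f i' \<Longrightarrow> same_row c M i i'" if "i \<in> {..<r}" "i' \<in> {..<r}" for i i'
      using inj_on_members_below[OF finite chain] that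
      by (auto simp: f \<C>_def same_row_iff_row_support dest: inj_onD)
  qed (use row_classes in auto)
  ultimately have f_partition: "ordered_partition d {..<r} k f"
    using members_below_image[OF finite chain] by (auto simp: ordered_partition_def k f)
  have "g ` {..<c} = members_containing \<C> ` \<Union>\<C>"
    using \<open>\<Union>\<C> = {..<c}\<close> by (auto simp: g)
  moreover have "card {j \<in> {..<c}. g j = b} \<le> d" for b
  proof (rule card_fibre_le[where R = "same_col r M"])
    show "g j = g j' \<Longrightarrow> same_col r M j j'" if "j \<in> {..<c}" "j' \<in> {..<c}" for j j'
      using entries that by (simp add: same_col_def)
  qed (use col_classes in auto)
  ultimately have "ordered_partition d {..<c} k g"
    using members_containing_image[OF finite chain \<open>{} \<notin> \<C>\<close>]
    by (auto simp: ordered_partition_def k g)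
  with f_partition staircase show ?thesis
    by blast
qed

lemma card_in_L:
  "card {M. in_L d r c M} =
    (\<Sum>k\<le>r. card {f. ordered_partition d {..<r} k f} * card {g. ordered_partition d {..<c} k g})"
proof -
  define codes where "codes = (SIGMA k:{..r}.
      {f. ordered_partition d {..<r} k f} \<times> {g. ordered_partition d {..<c} k g})"
  have "bij_betw (\<lambda>(k, f, g). staircase r c k f g) codes {M. in_L d r c M}"
  proof (rule bij_betw_byWitness[where f' = "staircase_code r c"])
    show "\<forall>x\<in>codes. staircase_code r c (case x of (k, f, g) \<Rightarrow> staircase r c k f g) = x"
      by (auto simp: codes_def staircase_code_staircase)
    show "\<forall>M\<in>{M. in_L d r c M}. (case staircase_code r c M of (k, f, g) \<Rightarrow> staircase r c k f g) = M"
      using in_L_staircase_code by (fastforce split: prod.split)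
    show "(\<lambda>(k, f, g). staircase r c k f g) ` codes \<subseteq> {M. in_L d r c M}"
      by (auto simp: codes_def in_L_staircase)
    show "staircase_code r c ` {M. in_L d r c M} \<subseteq> codes"
    proof
      fix x assume "x \<in> staircase_code r c ` {M. in_L d r c M}"
      then obtain M where "in_L d r c M" and x: "x = staircase_code r c M"
        by auto
      obtain k f g where code: "staircase_code r c M = (k, f, g)"
        by (metis prod_cases3)
      have "k \<le> r"
        using code card_image_le[of "{..<r}" "row_support c M"] by (simp add: staircase_code_def Let_def)
      then show "x \<in> codes"
        using in_L_staircase_code[OF \<open>in_L d r c M\<close> code] code x by (simp add: codes_def)
    qed
  qed
  then have "card {M. in_L d r c M} = card codes"
    by (simp add: bij_betw_same_card)
  also have "\<dots> = (\<Sum>k\<le>r. card {f. ordered_partition d {..<r} k f} * card {g. ordered_partition d {..<c} k g})"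
    by (simp add: codes_def card_SigmaI finite_ordered_partitions card_cartesian_product)
  finally show ?thesis .
qed

section \<open>The generating function\<close>

lemma L_series_nth:
  "L_series d $ r $ c = (\<Sum>k\<le>r. (block_egf d ^ k) $ r * (block_egf d ^ k) $ c)"
  by (simp add: L_series_def card_in_L sum_divide_distrib card_ordered_partitions)

text \<open>Here F is embedded once in the outer variable x and once, as a constant, in the inner
  variable y, so that G is the bivariate series of the diagonal \<open>\<Sum>k. F(x)^k F(y)^k\<close>.\<close>
lemma one_minus_product_mult_eq_1:
  fixes F :: "'a::comm_ring_1 fps" and G :: "'a fps fps"
  assumes F0: "F $ 0 = 0" and G: "\<And>r c. G $ r $ c = (\<Sum>k\<le>r. (F ^ k) $ r * (F ^ k) $ c)"
  shows "(1 - Abs_fps (\<lambda>i. fps_const (F $ i)) * fps_const F) * G = 1"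
proof (intro fps_ext)
  fix r c
  let ?A = "Abs_fps (\<lambda>i. fps_const (F $ i))"
  have G_upto: "G $ r $ c = (\<Sum>k\<le>K. (F ^ k) $ r * (F ^ k) $ c)" if "r \<le> K" for r c K
    unfolding G using that startsby_zero_power_prefix[OF F0]
    by (intro sum.mono_neutral_left) auto
  have "(?A * (fps_const F * G)) $ r = (\<Sum>s\<le>r. fps_const (F $ s) * (F * G $ (r - s)))"
    by (simp add: fps_mult_nth[of ?A] atLeast0AtMost)
  then have "(?A * (fps_const F * G)) $ r $ c
      = (\<Sum>s\<le>r. F $ s * (\<Sum>t\<le>c. F $ t * G $ (r - s) $ (c - t)))"
    by (simp add: fps_sum_nth fps_mult_nth[of F] atLeast0AtMost)
  also have "\<dots> = (\<Sum>s\<le>r. F $ s * (\<Sum>t\<le>c. F $ t * (\<Sum>k\<le>r. (F ^ k) $ (r - s) * (F ^ k) $ (c - t))))"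
    by (intro sum.cong refl arg_cong2[where f = "(*)"] G_upto) simp
  also have "\<dots> = (\<Sum>s\<le>r. \<Sum>k\<le>r. \<Sum>t\<le>c. (F $ s * (F ^ k) $ (r - s)) * (F $ t * (F ^ k) $ (c - t)))"
    by (simp add: sum_distrib_left mult_ac sum.swap[of _ "{..c}"])
  also have "\<dots> = (\<Sum>k\<le>r. \<Sum>s\<le>r. \<Sum>t\<le>c. (F $ s * (F ^ k) $ (r - s)) * (F $ t * (F ^ k) $ (c - t)))"
    by (rule sum.swap)
  also have "\<dots> = (\<Sum>k\<le>r. (\<Sum>s\<le>r. F $ s * (F ^ k) $ (r - s)) * (\<Sum>t\<le>c. F $ t * (F ^ k) $ (c - t)))"
    by (simp add: sum_product)
  also have "\<dots> = (\<Sum>k\<le>r. (F ^ Suc k) $ r * (F ^ Suc k) $ c)"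
    by (simp add: fps_mult_nth atLeast0AtMost)
  also have "\<dots> = G $ r $ c - (if r = 0 \<and> c = 0 then 1 else 0)"
  proof -
    have "G $ r $ c = (F ^ 0) $ r * (F ^ 0) $ c + (\<Sum>k\<le>r. (F ^ Suc k) $ r * (F ^ Suc k) $ c)"
      using G_upto[of r "Suc r" c] unfolding sum.atMost_Suc_shift by simp
    then show ?thesis
      by simp
  qed
  finally have "(?A * (fps_const F * G)) $ r $ c = G $ r $ c - (if r = 0 \<and> c = 0 then 1 else 0)" .
  moreover have "(1 - ?A * fps_const F) * G = G - ?A * (fps_const F * G)"
    by (simp add: algebra_simps)
  ultimately show "((1 - ?A * fps_const F) * G) $ r $ c = (1 :: 'a fps fps) $ r $ c"
    by (cases "r = 0"; cases "c = 0") simp_all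
qed

lemma fps_inverse_unique_ring1:
  fixes f g :: "'a::{comm_ring_1,inverse} fps"
  assumes fg: "f * g = 1" and f0: "f $ 0 = 1" and "inverse (1::'a) = 1"
  shows "inverse f = g"
proof -
  have "g $ 0 = 1"
    using arg_cong[OF fg, of "\<lambda>h. h $ 0"] f0 by simp
  then have "fps_right_inverse f 1 = g"
    using fps_lr_inverse_unique_ring1(2)[OF fg] f0 by simp
  then show ?thesis
    using f0 assms(3) by (simp add: fps_inverse_def)
qed

theorem theorem3:
  fixes d :: nat
  assumes "d \<ge> 1"
  shows "L_series d = inverse (E_x d + E_y d - E_x d * E_y d)"
proof -
  let ?A = "Abs_fps (\<lambda>i. fps_const (block_egf d $ i))" and ?B = "fps_const (block_egf d)"
  have "E_x d = ?A + 1"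
    by (rule fps_ext) (simp add: E_x_def block_egf_def fps_const_sub flip: fps_const_1_eq_1)
  moreover have "E_y d = ?B + 1"
    by (simp add: E_y_def block_egf_def fps_const_sub flip: fps_const_1_eq_1)
  ultimately have E: "E_x d + E_y d - E_x d * E_y d = 1 - ?A * ?B"
    by (simp add: algebra_simps)
  have "(1 - ?A * ?B) * L_series d = 1"
    by (rule one_minus_product_mult_eq_1) (simp_all add: block_egf_nth L_series_nth)
  moreover have "inverse (1 :: rat fps) = 1"
    by (rule fps_inverse_unique) simp
  ultimately show ?thesis
    unfolding E by (intro fps_inverse_unique_ring1[symmetric]) (simp_all add: block_egf_nth)
qed

end
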